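(* Fix $a>0$. For $\beta>0$ let $\overline{q}_0$ be the solution of $\mathrm{d}\overline{q}_0(t)=\mathrm{d}W(t)+\frac14\big(a-e^{\overline{q}_0(t)/\beta}\big)\mathrm{d}t$, $\overline{q}_0(0)=0$, where $W$ is a standard Brownian motion, and let $l_2:=\beta^{1/6}$. Then for any $\gamma<0$, $$\mathbb{P}\Big(\inf\{t\geq0:\overline{q}_0(t)=l_2\}<\inf\{t\geq0:\overline{q}_0(t)=\gamma\}\Big)\longrightarrow 0\quad\text{as }\beta\to0.$$ *)

theory Defs
  imports "HOL-Probability.Probability"
begin

definition brownian_motion :: "'a measure \<Rightarrow> (real \<Rightarrow> 'a \<Rightarrow> real) \<Rightarrow> bool" where
  "brownian_motion M W \<longleftrightarrow>
     prob_space M \<and>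
     (\<forall>t\<ge>0. W t \<in> borel_measurable M) \<and>
     (\<forall>\<omega>\<in>space M. W 0 \<omega> = 0 \<and> continuous_on {0..} (\<lambda>t. W t \<omega>)) \<and>
     (\<forall>s t. 0 \<le> s \<and> s < t \<longrightarrow>
        distributed M lborel (\<lambda>\<omega>. W t \<omega> - W s \<omega>)
          (\<lambda>x. ennreal (normal_density 0 (sqrt (t - s)) x))) \<and>
     (\<forall>(n::nat) (ts::nat \<Rightarrow> real). 0 \<le> ts 0 \<and> (\<forall>i<n. ts i < ts (Suc i)) \<longrightarrow>
        prob_space.indep_vars M (\<lambda>_. borel) (\<lambda>i \<omega>. W (ts (Suc i)) \<omega> - W (ts i) \<omega>) {..<n})"

text \<open>First hitting time of level c by a path f on [0, infinity); infimum of the empty set is infinity.\<close>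
definition hit_time :: "(real \<Rightarrow> real) \<Rightarrow> real \<Rightarrow> ereal" where
  "hit_time f c = Inf {ereal t | t. 0 \<le> t \<and> f t = c}"

end

theory Submission
  imports Defs "HOL-Real_Asymp.Real_Asymp"
begin

text \<open>Write \<open>l = \<beta> powr (1/6)\<close>. Wherever \<open>q \<ge> l/2\<close>, the drift \<open>(a - exp (q/\<beta>))/4\<close> is
  below \<open>-K\<close> with \<open>K = (exp (l/(2\<beta>)) - a)/4\<close>, which grows faster than any power of \<open>1/l\<close>.
  Climbing from \<open>l/2\<close> to \<open>l\<close> in time \<open>h\<close> therefore takes a Brownian increment of at least
  \<open>l/2 + K h\<close> over that time, which is impossible for small \<open>\<beta>\<close> as long as the Brownian path
  has the dyadic modulus of continuity \<open>C (9/10)^n\<close> at scale \<open>2^-n\<close>. Fourth-moment bounds on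
  dyadic increments and chaining show that this modulus holds on \<open>[0, N]\<close> outside an event of
  probability \<open>O(N/C^4)\<close>. On that event \<open>q < l\<close> up to time \<open>N\<close>, so if \<open>l\<close> is hit before
  \<open>\<gamma>\<close> then \<open>q\<close> stays in \<open>(\<gamma>, l)\<close> on \<open>[0, N]\<close>; this forces each unit increment
  \<open>W (k+1) - W k\<close>, \<open>k < N\<close>, to exceed \<open>\<gamma> - 1 - a/4\<close>, an event of probability \<open>r^N\<close>
  with \<open>r < 1\<close>. The ratio \<open>9/10\<close> is chosen so that the fourth-moment bounds are summable over
  the dyadic levels (\<open>2 (10/9)^4 / 4 < 1\<close>) and \<open>(9/10)^7 \<le> 1/2\<close>.\<close>

definition dyadic_floor :: "nat \<Rightarrow> real \<Rightarrow> real" where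
  "dyadic_floor j x = of_int \<lfloor>x * 2^j\<rfloor> / 2^j"

lemma dyadic_floor_bounds:
  assumes "0 \<le> x"
  shows "0 \<le> dyadic_floor j x" "dyadic_floor j x \<le> x" "x - dyadic_floor j x < 1 / 2^j"
proof -
  have "of_int \<lfloor>x * 2^j\<rfloor> \<le> x * 2^j" "x * 2^j - of_int \<lfloor>x * 2^j\<rfloor> < 1"
    by linarith+
  moreover have "x - dyadic_floor j x = (x * 2^j - of_int \<lfloor>x * 2^j\<rfloor>) / 2^j"
    by (simp add: dyadic_floor_def field_simps)
  ultimately show "dyadic_floor j x \<le> x" "x - dyadic_floor j x < 1 / 2^j"
    by (simp_all add: dyadic_floor_def divide_le_eq divide_strict_right_mono)
  show "0 \<le> dyadic_floor j x"
    unfolding dyadic_floor_def using assms by simp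
qed

lemma dyadic_floor_tendsto:
  assumes "0 \<le> x"
  shows "(\<lambda>j. dyadic_floor j x) \<longlonglongrightarrow> x"
proof (rule tendsto_sandwich)
  show "\<forall>\<^sub>F j in sequentially. x - 1 / 2^j \<le> dyadic_floor j x"
    "\<forall>\<^sub>F j in sequentially. dyadic_floor j x \<le> x"
    using dyadic_floor_bounds[OF assms] by (auto intro!: always_eventually simp: algebra_simps less_imp_le)
  have "(\<lambda>j. x - (1/2) ^ j) \<longlonglongrightarrow> x - 0"
    by (intro tendsto_intros) simp
  then show "(\<lambda>j. x - 1 / 2^j) \<longlonglongrightarrow> x"
    by (simp add: power_one_over)
qed simp

lemma dyadic_floor_Suc_cases:
  assumes "0 \<le> x"
  obtains k where "dyadic_floor j x = real (2 * k) / 2 ^ Suc j"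
    and "dyadic_floor (Suc j) x = real (2 * k) / 2 ^ Suc j \<or>
         dyadic_floor (Suc j) x = real (Suc (2 * k)) / 2 ^ Suc j"
proof -
  define y where "y = x * 2^j"
  define k where "k = nat \<lfloor>y\<rfloor>"
  have k: "\<lfloor>y\<rfloor> = int k" using assms by (simp add: k_def y_def)
  have "\<lfloor>2 * y\<rfloor> = int (2 * k) \<or> \<lfloor>2 * y\<rfloor> = int (Suc (2 * k))"
    using k by linarith
  moreover have "dyadic_floor (Suc j) x = of_int \<lfloor>2 * y\<rfloor> / 2 ^ Suc j"
    by (simp add: dyadic_floor_def y_def mult.commute mult.left_commute)
  moreover have "dyadic_floor j x = real (2 * k) / 2 ^ Suc j"
    by (simp add: dyadic_floor_def y_def[symmetric] k)
  ultimately show thesis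
    by (intro that[of k]) auto
qed

context
  fixes f :: "real \<Rightarrow> real" and N :: nat and M \<theta> :: real
  assumes cont: "continuous_on {0..real N} f"
    and dyadic_increments: "\<And>j k. k < N * 2^j \<Longrightarrow> \<bar>f (real (Suc k) / 2^j) - f (real k / 2^j)\<bar> \<le> M * \<theta>^j"
    and M: "0 \<le> M" and \<theta>: "0 \<le> \<theta>" "\<theta> < 1"
begin

lemma dyadic_floor_Suc_increment:
  fixes x :: real
  assumes "0 \<le> x" "x \<le> N"
  shows "\<bar>f (dyadic_floor (Suc j) x) - f (dyadic_floor j x)\<bar> \<le> M * \<theta> ^ Suc j"
proof -
  obtain k where k: "dyadic_floor j x = real (2 * k) / 2 ^ Suc j"
    and "dyadic_floor (Suc j) x = real (2 * k) / 2 ^ Suc j \<or>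
         dyadic_floor (Suc j) x = real (Suc (2 * k)) / 2 ^ Suc j"
    using dyadic_floor_Suc_cases[OF assms(1)] by blast
  then consider "dyadic_floor (Suc j) x = dyadic_floor j x"
    | "dyadic_floor (Suc j) x = real (Suc (2 * k)) / 2 ^ Suc j" by auto
  then show ?thesis
  proof cases
    case 2
    have "real (Suc (2 * k)) / 2 ^ Suc j \<le> N"
      using dyadic_floor_bounds(2)[OF assms(1), of "Suc j"] 2 assms(2) by simp
    then have "real (Suc (2 * k)) \<le> real (N * 2 ^ Suc j)"
      by (simp add: divide_le_eq)
    then have "Suc (2 * k) \<le> N * 2 ^ Suc j"
      by (simp only: of_nat_le_iff)
    then show ?thesis
      using dyadic_increments[of "2 * k" "Suc j"] 2 k by simp
  qed (use M \<theta> in simp)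
qed

lemma dyadic_floor_approx:
  fixes x :: real
  assumes "0 \<le> x" "x \<le> N"
  shows "\<bar>f x - f (dyadic_floor n x)\<bar> \<le> M * \<theta> ^ Suc n / (1 - \<theta>)"
proof -
  have partial: "\<bar>f (dyadic_floor (n + m) x) - f (dyadic_floor n x)\<bar>
                   \<le> M * \<theta> ^ Suc n * (1 - \<theta> ^ m) / (1 - \<theta>)" for m
  proof (induction m)
    case (Suc m)
    have "\<bar>f (dyadic_floor (n + Suc m) x) - f (dyadic_floor n x)\<bar>
          \<le> M * \<theta> ^ Suc (n + m) + M * \<theta> ^ Suc n * (1 - \<theta> ^ m) / (1 - \<theta>)"
      using dyadic_floor_Suc_increment[OF assms, of "n + m"] Suc.IH by simp
    also have "\<dots> = M * \<theta> ^ Suc n * (1 - \<theta> ^ Suc m) / (1 - \<theta>)"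
      using \<theta> by (simp add: power_add field_simps)
    finally show ?case .
  qed simp
  have "(\<lambda>m. dyadic_floor (n + m) x) \<longlonglongrightarrow> x"
    using LIMSEQ_ignore_initial_segment[OF dyadic_floor_tendsto[OF assms(1)], of n]
    by (simp add: add.commute)
  then have "(\<lambda>m. f (dyadic_floor (n + m) x)) \<longlonglongrightarrow> f x"
    by (rule continuous_on_tendsto_compose[OF cont])
      (use assms dyadic_floor_bounds[OF assms(1)] in \<open>auto intro!: always_eventually intro: order_trans\<close>)
  then have "(\<lambda>m. \<bar>f (dyadic_floor (n + m) x) - f (dyadic_floor n x)\<bar>) \<longlonglongrightarrow> \<bar>f x - f (dyadic_floor n x)\<bar>"
    by (intro tendsto_intros)
  moreover have "M * \<theta> ^ Suc n * (1 - \<theta> ^ m) / (1 - \<theta>) \<le> M * \<theta> ^ Suc n / (1 - \<theta>)" for m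
    using M \<theta> by (intro divide_right_mono mult_left_le) auto
  ultimately show ?thesis
    using partial order_trans by (intro LIMSEQ_le_const2) blast+
qed

lemma dyadic_modulus:
  fixes s t :: real
  assumes "0 \<le> s" "s \<le> t" "t \<le> N" "t - s \<le> 1 / 2^n"
  shows "\<bar>f t - f s\<bar> \<le> (1 + \<theta>) / (1 - \<theta>) * M * \<theta> ^ n"
proof -
  define k where "k = nat \<lfloor>s * 2^n\<rfloor>"
  have s_floor: "dyadic_floor n s = real k / 2^n"
    using assms(1) by (simp add: dyadic_floor_def k_def)
  have "\<lfloor>t * 2^n\<rfloor> = int k \<or> \<lfloor>t * 2^n\<rfloor> = int k + 1"
  proof -
    have "s * 2^n \<le> t * 2^n" "t * 2^n \<le> s * 2^n + 1"
      using assms by (simp_all add: field_simps)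
    moreover have "int k = \<lfloor>s * 2^n\<rfloor>"
      using assms(1) by (simp add: k_def)
    ultimately show ?thesis
      using floor_mono[of "s * 2^n" "t * 2^n"] floor_mono[of "t * 2^n" "s * 2^n + 1"] by linarith
  qed
  then consider "dyadic_floor n t = dyadic_floor n s"
    | "dyadic_floor n t = real (Suc k) / 2^n"
    using s_floor by (auto simp: dyadic_floor_def)
  then have middle: "\<bar>f (dyadic_floor n t) - f (dyadic_floor n s)\<bar> \<le> M * \<theta> ^ n"
  proof cases
    case 2
    have "real (Suc k) / 2^n \<le> N"
      using dyadic_floor_bounds(2)[of t n] 2 assms by simp
    then have "real (Suc k) \<le> real (N * 2^n)"
      by (simp add: divide_le_eq)
    then have "Suc k \<le> N * 2^n"
      by (simp only: of_nat_le_iff)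
    then show ?thesis
      using dyadic_increments[of k n] 2 s_floor by simp
  qed (use M \<theta> in simp)
  have "\<bar>f t - f s\<bar> \<le> \<bar>f t - f (dyadic_floor n t)\<bar> + \<bar>f (dyadic_floor n t) - f (dyadic_floor n s)\<bar>
                       + \<bar>f s - f (dyadic_floor n s)\<bar>"
    by linarith
  also have "\<dots> \<le> M * \<theta> ^ Suc n / (1 - \<theta>) + M * \<theta> ^ n + M * \<theta> ^ Suc n / (1 - \<theta>)"
    using dyadic_floor_approx[of t n] dyadic_floor_approx[of s n] middle assms by (intro add_mono) auto
  also have "\<dots> = (1 + \<theta>) / (1 - \<theta>) * M * \<theta> ^ n"
    using \<theta> by (simp add: divide_simps) (simp add: algebra_simps)
  finally show ?thesis .
qed

end

lemma first_passage:
  fixes f :: "real \<Rightarrow> real"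
  assumes cont: "continuous_on {a..b} f" and "a \<le> b" "f a \<le> z" "z \<le> f b"
  shows "\<exists>t. a \<le> t \<and> t \<le> b \<and> f t = z \<and> (\<forall>u\<in>{a..t}. f u \<le> z)"
proof -
  define Z where "Z = {u\<in>{a..b}. f u = z}"
  have "closed Z"
    unfolding Z_def by (rule continuous_closed_preimage_constant[OF cont]) simp
  moreover have "Z \<noteq> {}" "bdd_below Z"
    using IVT'[of f a z b] assms unfolding Z_def by (auto intro: bdd_belowI[of _ a])
  ultimately have "Inf Z \<in> Z"
    by (blast intro: closed_contains_Inf)
  have below: "f u \<le> z" if u: "a \<le> u" "u \<le> Inf Z" for u
  proof (rule ccontr)
    assume "\<not> f u \<le> z"
    moreover obtain x where "a \<le> x" "x \<le> u" "f x = z"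
      using IVT'[of f a z u] continuous_on_subset[OF cont, of "{a..u}"] u \<open>Inf Z \<in> Z\<close> \<open>\<not> f u \<le> z\<close> assms
      unfolding Z_def by auto
    moreover from this have "x \<in> Z"
      using u \<open>Inf Z \<in> Z\<close> unfolding Z_def by auto
    ultimately have "x = u"
      using cInf_lower[OF _ \<open>bdd_below Z\<close>, of x] u by linarith
    then show False
      using \<open>f x = z\<close> \<open>\<not> f u \<le> z\<close> by simp
  qed
  moreover have "a \<le> Inf Z" "Inf Z \<le> b" "f (Inf Z) = z"
    using \<open>Inf Z \<in> Z\<close> by (auto simp: Z_def)
  ultimately show ?thesis
    by (intro exI[of _ "Inf Z"]) auto
qed

lemma last_exit:
  fixes f :: "real \<Rightarrow> real"
  assumes cont: "continuous_on {a..b} f" and "a \<le> b" "f a \<le> y" "y \<le> f b"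
  shows "\<exists>s. a \<le> s \<and> s \<le> b \<and> f s = y \<and> (\<forall>u\<in>{s..b}. y \<le> f u)"
proof -
  define g where "g u = - f (a + b - u)" for u
  have "continuous_on {a..b} (\<lambda>u. a + b - u)" "(\<lambda>u. a + b - u) ` {a..b} \<subseteq> {a..b}"
    by (auto intro!: continuous_intros)
  then have "continuous_on {a..b} g"
    unfolding g_def by (intro continuous_on_minus continuous_on_compose2[OF cont])
  then obtain t where t: "a \<le> t" "t \<le> b" "g t = - y" "\<forall>u\<in>{a..t}. g u \<le> - y"
    using first_passage[of a b g "- y"] assms by (auto simp: g_def)
  have "y \<le> f u" if "a + b - t \<le> u" "u \<le> b" for u
    using t(4) that \<open>a \<le> t\<close> by (auto simp: g_def dest: bspec[of _ _ "a + b - u"])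
  then show ?thesis
    using t unfolding g_def by (intro exI[of _ "a + b - t"]) auto
qed

lemma crossing_interval:
  fixes f :: "real \<Rightarrow> real"
  assumes cont: "continuous_on {a..b} f" and "a \<le> b" "f a \<le> y" "y < z" "z \<le> f b"
  shows "\<exists>s t. a \<le> s \<and> s < t \<and> t \<le> b \<and> f s = y \<and> f t = z \<and> (\<forall>u\<in>{s..t}. y \<le> f u \<and> f u \<le> z)"
proof -
  have "f a \<le> z"
    using assms by linarith
  then obtain t where t: "a \<le> t" "t \<le> b" "f t = z" "\<forall>u\<in>{a..t}. f u \<le> z"
    using first_passage[OF cont \<open>a \<le> b\<close> _ \<open>z \<le> f b\<close>] by blast
  have "continuous_on {a..t} f"
    by (rule continuous_on_subset[OF cont]) (use t in auto)
  moreover have "y \<le> f t"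
    using t(3) \<open>y < z\<close> by simp
  ultimately obtain s where s: "a \<le> s" "s \<le> t" "f s = y" "\<forall>u\<in>{s..t}. y \<le> f u"
    using last_exit[of a t f y] t(1) \<open>f a \<le> y\<close> by blast
  moreover have "s \<noteq> t"
    using s t \<open>y < z\<close> by auto
  ultimately show ?thesis
    using t by (intro exI[of _ s] exI[of _ t]) auto
qed

lemma exists_dyadic_scale:
  fixes h :: real
  assumes "0 < h" "h \<le> 1"
  obtains n where "1 / 2 ^ Suc n < h" "h \<le> 1 / 2 ^ n"
proof -
  obtain m where "(1/2::real) ^ m < h"
    using real_arch_pow_inv[OF assms(1), of "1/2"] by auto
  then obtain n where "\<not> (1/2::real) ^ n < h" "(1/2::real) ^ Suc n < h"
    using exists_least_lemma[of "\<lambda>n. (1/2::real) ^ n < h"] assms(2) by auto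
  then show thesis
    by (intro that[of n]) (auto simp: power_one_over)
qed

lemma rise_against_drift_bound:
  fixes d h K C :: real
  assumes "0 < d" "0 \<le> K" "0 < h" "h \<le> 1"
    and rise: "\<And>n. h \<le> 1 / 2^n \<Longrightarrow> d + K * h \<le> C * (9/10)^n"
  shows "K * d^7 \<le> 2 * C^8"
proof -
  obtain n where n: "1 / 2 ^ Suc n < h" "h \<le> 1 / 2 ^ n"
    using exists_dyadic_scale assms(3,4) by blast
  have "0 \<le> K * h"
    using assms(2,3) by simp
  then have d: "d \<le> C * (9/10)^n" and Kh: "K * h \<le> C * (9/10)^n"
    using rise[OF n(2)] \<open>0 < d\<close> by linarith+
  then have "0 < C * (9/10)^n"
    using \<open>0 < d\<close> by linarith
  then have "0 < C"
    by (simp add: zero_less_mult_iff)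
  have "C * (9/10)^n \<le> C"
    using \<open>0 < C\<close> by (intro mult_left_le power_le_one) auto
  \<comment> \<open>\<open>d \<le> C (9/10)^n\<close> bounds \<open>n\<close> above and \<open>K / 2^(n+1) < K h \<le> C\<close> bounds it below;
     since \<open>(9/10)^7 \<le> 1/2\<close>, the two bounds are compatible only if \<open>K d^7 \<le> 2 C^8\<close>.\<close>
  have "(d / C)^7 \<le> ((9/10)^n)^7"
    using d \<open>0 < d\<close> \<open>0 < C\<close> by (intro power_mono) (auto simp: divide_le_eq mult.commute)
  also have "\<dots> = ((9/10::real)^7)^n"
    by (simp flip: power_mult add: mult.commute)
  also have "\<dots> \<le> (1/2)^n"
    by (intro power_mono) (auto simp: eval_nat_numeral)
  finally have "K * (d / C)^7 \<le> K * (1/2)^n"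
    using \<open>0 \<le> K\<close> by (intro mult_left_mono)
  also have "\<dots> = 2 * (K * (1 / 2 ^ Suc n))"
    by (simp add: power_one_over)
  also have "\<dots> \<le> 2 * (K * h)"
    using \<open>0 \<le> K\<close> n(1) by (intro mult_left_mono) auto
  also have "\<dots> \<le> 2 * C"
    using Kh \<open>C * (9/10)^n \<le> C\<close> by simp
  finally show ?thesis
    using \<open>0 < C\<close> by (simp add: power_divide divide_le_eq) (simp add: eval_nat_numeral algebra_simps)
qed

lemma upcrossing_against_drift:
  fixes q w :: "real \<Rightarrow> real" and y z K T t' :: real
  assumes cont: "continuous_on {0..T} q" and start: "q 0 \<le> y" and "y < z"
    and drift: "\<And>u v. 0 \<le> u \<Longrightarrow> u \<le> v \<Longrightarrow> v \<le> T \<Longrightarrow> (\<forall>x\<in>{u..v}. y \<le> q x) \<Longrightarrow>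
                  q v - q u + K * (v - u) \<le> w v - w u"
    and t': "0 \<le> t'" "t' \<le> T" "z \<le> q t'"
  obtains s t where "0 \<le> s" "s < t" "t \<le> T" "z - y + K * (t - s) \<le> w t - w s"
    and "\<And>u. s \<le> u \<Longrightarrow> u \<le> t \<Longrightarrow> K * (t - u) \<le> w t - w u"
proof -
  have "continuous_on {0..t'} q"
    by (rule continuous_on_subset[OF cont]) (use t' in auto)
  then obtain s t where st: "0 \<le> s" "s < t" "t \<le> t'" "q s = y" "q t = z"
    and between: "\<forall>u\<in>{s..t}. y \<le> q u \<and> q u \<le> z"
    using crossing_interval[OF _ t'(1) start \<open>y < z\<close> t'(3)] by blast
  have rise: "z - q u + K * (t - u) \<le> w t - w u" if "s \<le> u" "u \<le> t" for u
  proof -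
    have "q t - q u + K * (t - u) \<le> w t - w u"
      using that st t' between by (intro drift) auto
    then show ?thesis
      using st(5) by simp
  qed
  show thesis
  proof (rule that)
    show "0 \<le> s" "s < t" "t \<le> T"
      using st t' by auto
    show "z - y + K * (t - s) \<le> w t - w s"
      using rise[of s] st by simp
    show "K * (t - u) \<le> w t - w u" if "s \<le> u" "u \<le> t" for u
    proof -
      have "q u \<le> z"
        using between that by auto
      then show ?thesis
        using rise[OF that] by linarith
    qed
  qed
qed

lemma restoring_drift_keeps_below:
  fixes q w :: "real \<Rightarrow> real" and y z C K T :: real
  assumes cont: "continuous_on {0..T} q" and start: "q 0 \<le> y" and "y < z"
    and drift: "\<And>u v. 0 \<le> u \<Longrightarrow> u \<le> v \<Longrightarrow> v \<le> T \<Longrightarrow> (\<forall>x\<in>{u..v}. y \<le> q x) \<Longrightarrow>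
                  q v - q u + K * (v - u) \<le> w v - w u"
    and modulus: "\<And>n s t. 0 \<le> s \<Longrightarrow> s \<le> t \<Longrightarrow> t \<le> T \<Longrightarrow> t - s \<le> 1 / 2^n \<Longrightarrow>
                  \<bar>w t - w s\<bar> \<le> C * (9/10)^n"
    and "C < K" and strong: "2 * C^8 < K * (z - y)^7"
  shows "\<forall>t\<in>{0..T}. q t < z"
proof (rule ccontr)
  assume "\<not> (\<forall>t\<in>{0..T}. q t < z)"
  then obtain t' where "0 \<le> t'" "t' \<le> T" "z \<le> q t'"
    by (auto simp: not_less)
  then obtain s t where st: "0 \<le> s" "s < t" "t \<le> T" and rise: "z - y + K * (t - s) \<le> w t - w s"
    and rise_from: "\<And>u. s \<le> u \<Longrightarrow> u \<le> t \<Longrightarrow> K * (t - u) \<le> w t - w u"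
    using upcrossing_against_drift[OF cont start \<open>y < z\<close> drift] by blast
  have "0 \<le> C"
    using modulus[of 0 0 0] st by simp
  then have "0 \<le> K"
    using \<open>C < K\<close> by linarith
  show False
  proof (cases "t - s \<le> 1")
    case True
    have "K * (z - y)^7 \<le> 2 * C^8"
    proof (rule rise_against_drift_bound)
      fix n assume "t - s \<le> 1 / 2^n"
      then have "\<bar>w t - w s\<bar> \<le> C * (9/10)^n"
        using st by (intro modulus) auto
      then show "z - y + K * (t - s) \<le> C * (9/10)^n"
        using rise by linarith
    qed (use st \<open>y < z\<close> \<open>0 \<le> K\<close> True in auto)
    then show False
      using strong by linarith
  next
    case False
    then have "K \<le> w t - w (t - 1)"
      using rise_from[of "t - 1"] by simp
    moreover have "\<bar>w t - w (t - 1)\<bar> \<le> C * (9/10)^0"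
      using False st by (intro modulus) auto
    ultimately show False
      using \<open>C < K\<close> by simp
  qed
qed

lemma hit_time_less_imp:
  assumes "hit_time f x < hit_time f y"
  obtains t where "0 \<le> t" "f t = x" "\<And>u. 0 \<le> u \<Longrightarrow> u \<le> t \<Longrightarrow> f u \<noteq> y"
proof -
  obtain t where t: "0 \<le> t" "f t = x" "ereal t < hit_time f y"
    using assms unfolding hit_time_def[of f x] by (auto simp: Inf_less_iff)
  have "f u \<noteq> y" if "0 \<le> u" "u \<le> t" for u
  proof
    assume "f u = y"
    then have "hit_time f y \<le> ereal u"
      unfolding hit_time_def using that by (intro Inf_lower) auto
    then have "ereal t < ereal u"
      using t(3) by (rule order.strict_trans2[rotated])
    then show False
      using that(2) by simp
  qed
  then show thesis
    using t by (intro that) auto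
qed

lemma above_until_hit_time:
  fixes f :: "real \<Rightarrow> real"
  assumes cont: "continuous_on {0..} f" and "\<gamma> < f 0"
    and below: "\<forall>t\<in>{0..T}. f t < l" and hit: "hit_time f l < hit_time f \<gamma>"
  shows "\<forall>t\<in>{0..T}. \<gamma> < f t"
proof (rule ballI, rule ccontr)
  fix t assume t: "t \<in> {0..T}" and "\<not> \<gamma> < f t"
  obtain t0 where t0: "0 \<le> t0" "f t0 = l" "\<And>u. 0 \<le> u \<Longrightarrow> u \<le> t0 \<Longrightarrow> f u \<noteq> \<gamma>"
    using hit_time_less_imp[OF hit] by blast
  have "T < t0"
  proof (rule ccontr)
    assume "\<not> T < t0"
    then have "f t0 < l"
      using below t0(1) by simp
    then show False
      using t0(2) by simp
  qed
  have "continuous_on {0..t} f"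
    using cont by (rule continuous_on_subset) auto
  then obtain x where "0 \<le> x" "x \<le> t" "f x = \<gamma>"
    using IVT2'[of f t \<gamma> 0] \<open>\<not> \<gamma> < f t\<close> \<open>\<gamma> < f 0\<close> t by auto
  then show False
    using t0(3)[of x] \<open>T < t0\<close> t by simp
qed

lemma integral_equation_increment:
  fixes q w g :: "real \<Rightarrow> real"
  assumes eq: "\<And>t. 0 \<le> t \<Longrightarrow> q t = w t + integral {0..t} g"
    and g: "continuous_on {0..} g" and "0 \<le> u" "u \<le> v"
  shows "q v - q u = w v - w u + integral {u..v} g"
proof -
  have "g integrable_on {0..v}"
    by (intro integrable_continuous_interval continuous_on_subset[OF g]) auto
  then have "integral {0..u} g + integral {u..v} g = integral {0..v} g"
    using assms by (intro Henstock_Kurzweil_Integration.integral_combine) auto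
  then show ?thesis
    using eq[of u] eq[of v] assms by simp
qed

lemma sde_unit_increments_lower_bound:
  fixes q w :: "real \<Rightarrow> real" and a \<beta> \<gamma> l C :: real and N :: nat
  assumes "0 < \<beta>" "\<gamma> < 0" "0 < l" "l \<le> 1"
    and "w 0 = 0" and cont: "continuous_on {0..} q"
    and sde: "\<And>t. 0 \<le> t \<Longrightarrow> q t = w t + integral {0..t} (\<lambda>s. (a - exp (q s / \<beta>)) / 4)"
    and modulus: "\<And>n s t. 0 \<le> s \<Longrightarrow> s \<le> t \<Longrightarrow> t \<le> real N \<Longrightarrow> t - s \<le> 1 / 2^n \<Longrightarrow>
                  \<bar>w t - w s\<bar> \<le> C * (9/10)^n"
    and strong_drift: "C < (exp (l / (2 * \<beta>)) - a) / 4"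
                      "2 * C^8 < (exp (l / (2 * \<beta>)) - a) / 4 * (l / 2)^7"
    and hit: "hit_time q l < hit_time q \<gamma>"
  shows "\<forall>k<N. \<gamma> - 1 - a/4 < w (real (Suc k)) - w (real k)"
proof -
  define g where "g s = (a - exp (q s / \<beta>)) / 4" for s
  have g_cont: "continuous_on {0..} g"
    unfolding g_def using cont \<open>0 < \<beta>\<close> by (intro continuous_intros) auto
  have g_int: "g integrable_on {u..v}" if "0 \<le> u" for u v
    using that by (intro integrable_continuous_interval continuous_on_subset[OF g_cont]) auto
  have increment: "q v - q u = w v - w u + integral {u..v} g" if "0 \<le> u" "u \<le> v" for u v
    using integral_equation_increment[OF _ g_cont that] sde unfolding g_def by blast
  have "q 0 = 0"
    using sde[of 0] \<open>w 0 = 0\<close> by simp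
  have below: "\<forall>t\<in>{0..real N}. q t < l"
  proof (rule restoring_drift_keeps_below[where y = "l / 2" and K = "(exp (l / (2 * \<beta>)) - a) / 4"])
    fix u v assume uv: "0 \<le> u" "u \<le> v" and high: "\<forall>x\<in>{u..v}. l / 2 \<le> q x"
    have "g x \<le> - ((exp (l / (2 * \<beta>)) - a) / 4)" if "x \<in> {u..v}" for x
      using high that \<open>0 < \<beta>\<close> by (simp add: g_def divide_right_mono field_simps)
    then have "integral {u..v} g \<le> integral {u..v} (\<lambda>_. - ((exp (l / (2 * \<beta>)) - a) / 4))"
      using uv by (intro integral_le g_int) auto
    then show "q v - q u + (exp (l / (2 * \<beta>)) - a) / 4 * (v - u) \<le> w v - w u"
      using increment[OF uv] uv by (simp add: algebra_simps)
  next
    show "continuous_on {0..real N} q"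
      by (rule continuous_on_subset[OF cont]) auto
  qed (use \<open>q 0 = 0\<close> \<open>0 < l\<close> modulus strong_drift in auto)
  have above: "\<forall>t\<in>{0..real N}. \<gamma> < q t"
    using above_until_hit_time[OF cont _ below hit] \<open>q 0 = 0\<close> \<open>\<gamma> < 0\<close> by simp
  show ?thesis
  proof (intro allI impI)
    fix k assume "k < N"
    have "integral {real k..real (Suc k)} g \<le> integral {real k..real (Suc k)} (\<lambda>_. a / 4)"
      by (intro integral_le g_int) (auto simp: g_def)
    then have "integral {real k..real (Suc k)} g \<le> a / 4"
      by simp
    moreover have "q (real k) < l" "\<gamma> < q (real (Suc k))"
      using below above \<open>k < N\<close> by auto
    ultimately show "\<gamma> - 1 - a/4 < w (real (Suc k)) - w (real k)"
      using increment[of k "Suc k"] \<open>l \<le> 1\<close> by simp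
  qed
qed

lemma normal_tail_fourth_moment:
  fixes X :: "'a \<Rightarrow> real"
  assumes "prob_space M" and X: "distributed M lborel X (\<lambda>x. ennreal (normal_density 0 \<sigma> x))"
    and "0 < \<sigma>" "0 < x"
  shows "measure M {\<omega>\<in>space M. x < \<bar>X \<omega>\<bar>} \<le> 3 * \<sigma>^4 / x^4"
proof -
  interpret prob_space M by fact
  have [measurable]: "X \<in> borel_measurable M"
    using distributed_measurable[OF X] by simp
  have moment: "has_bochner_integral lborel (\<lambda>y. normal_density 0 \<sigma> y * y ^ 4) (3 * \<sigma>^4)"
    using normal_moment_even[OF \<open>0 < \<sigma>\<close>, of 0 2]
    by (simp add: fact_numeral eval_nat_numeral field_simps)
  have "integrable M (\<lambda>\<omega>. X \<omega> ^ 4)"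
    using distributed_integrable[OF X, of "\<lambda>y. y^4"] moment by (simp add: integrable.intros)
  moreover have "(\<integral>\<omega>. X \<omega> ^ 4 \<partial>M) = 3 * \<sigma>^4"
    using distributed_integral[OF X, of "\<lambda>y. y^4"] has_bochner_integral_integral_eq[OF moment]
    by simp
  ultimately have "measure M {\<omega>\<in>space M. x^4 \<le> X \<omega> ^ 4} \<le> 3 * \<sigma>^4 / x^4"
    using integral_Markov_inequality_measure[of M "\<lambda>\<omega>. X \<omega> ^ 4" "space M" "x^4"] \<open>0 < x\<close>
    by simp
  moreover have "measure M {\<omega>\<in>space M. x < \<bar>X \<omega>\<bar>} \<le> measure M {\<omega>\<in>space M. x^4 \<le> X \<omega> ^ 4}"
  proof (rule finite_measure_mono)
    show "{\<omega>\<in>space M. x < \<bar>X \<omega>\<bar>} \<subseteq> {\<omega>\<in>space M. x^4 \<le> X \<omega> ^ 4}"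
    proof safe
      fix \<omega> assume "x < \<bar>X \<omega>\<bar>"
      then have "x^4 \<le> \<bar>X \<omega>\<bar>^4" using \<open>0 < x\<close> by (intro power_mono) auto
      then show "x^4 \<le> X \<omega> ^ 4" by (simp add: power_even_abs_numeral)
    qed
  qed measurable
  ultimately show ?thesis by linarith
qed

lemma std_normal_le_pos:
  fixes X :: "'a \<Rightarrow> real"
  assumes "prob_space M" and X: "distributed M lborel X (\<lambda>x. ennreal (normal_density 0 1 x))"
  shows "0 < measure M {\<omega>\<in>space M. X \<omega> \<le> c}"
proof -
  interpret prob_space M by fact
  define m where "m = exp (- ((\<bar>c\<bar> + 1)^2) / 2) / sqrt (2 * pi)"
  have density_lower: "ennreal m * indicator {c-1..c} y \<le> ennreal (normal_density 0 1 y) * indicator {..c} y"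
    for y
  proof (cases "y \<in> {c-1..c}")
    case True
    then have "y^2 \<le> (\<bar>c\<bar> + 1)^2"
      by (intro abs_le_square_iff[THEN iffD1]) auto
    then show ?thesis
      using True by (simp add: m_def normal_density_def indicator_def divide_right_mono)
  qed (simp add: indicator_def)
  have "{\<omega>\<in>space M. X \<omega> \<le> c} = X -` {..c} \<inter> space M" by auto
  then have "emeasure M {\<omega>\<in>space M. X \<omega> \<le> c}
               = (\<integral>\<^sup>+y. ennreal (normal_density 0 1 y) * indicator {..c} y \<partial>lborel)"
    using distributed_emeasure[OF X] by simp
  also have "\<dots> \<ge> (\<integral>\<^sup>+y. ennreal m * indicator {c-1..c} y \<partial>lborel)"
    by (intro nn_integral_mono density_lower)
  finally have "ennreal m \<le> emeasure M {\<omega>\<in>space M. X \<omega> \<le> c}"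
    by (simp add: nn_integral_cmult_indicator)
  moreover have "0 < m" by (simp add: m_def)
  ultimately show ?thesis by (simp add: emeasure_eq_measure)
qed

context
  fixes M :: "'a measure" and W :: "real \<Rightarrow> 'a \<Rightarrow> real"
  assumes BM: "brownian_motion M W"
begin

lemma brownian_motion_prob_space: "prob_space M"
  using BM unfolding brownian_motion_def by simp

lemma brownian_motion_measurable [measurable]: "0 \<le> t \<Longrightarrow> W t \<in> borel_measurable M"
  using BM unfolding brownian_motion_def by simp

lemma brownian_motion_increment_distributed:
  "0 \<le> s \<Longrightarrow> s < t \<Longrightarrow>
     distributed M lborel (\<lambda>\<omega>. W t \<omega> - W s \<omega>) (\<lambda>x. ennreal (normal_density 0 (sqrt (t - s)) x))"
  using BM unfolding brownian_motion_def by simp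

lemma brownian_motion_unit_increments_indep:
  "prob_space.indep_vars M (\<lambda>_. borel) (\<lambda>k \<omega>. W (real (Suc k)) \<omega> - W (real k) \<omega>) {..<n}"
  using BM unfolding brownian_motion_def by (auto dest!: spec[of _ n] spec[of _ real])

definition large_increments_at_level :: "real \<Rightarrow> nat \<Rightarrow> nat \<Rightarrow> 'a set" where
  "large_increments_at_level K N j = (\<Union>k<N * 2^j.
     {\<omega>\<in>space M. K * (9/10)^j < \<bar>W (real (Suc k) / 2^j) \<omega> - W (real k / 2^j) \<omega>\<bar>})"

definition large_dyadic_increments :: "real \<Rightarrow> nat \<Rightarrow> 'a set" where
  "large_dyadic_increments K N = (\<Union>j. large_increments_at_level K N j)"

definition unit_increments_above :: "real \<Rightarrow> nat \<Rightarrow> 'a set" where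
  "unit_increments_above c N = {\<omega>\<in>space M. \<forall>k<N. c < W (real (Suc k)) \<omega> - W (real k) \<omega>}"

lemma large_increments_at_level_sets [measurable]: "large_increments_at_level K N j \<in> sets M"
  unfolding large_increments_at_level_def by measurable

lemma large_dyadic_increments_sets [measurable]: "large_dyadic_increments K N \<in> sets M"
  unfolding large_dyadic_increments_def by measurable

lemma unit_increments_above_sets [measurable]: "unit_increments_above c N \<in> sets M"
  unfolding unit_increments_above_def by measurable

lemma modulus_outside_large_dyadic_increments:
  assumes "\<omega> \<in> space M" "\<omega> \<notin> large_dyadic_increments K N" "0 \<le> K"
    and "0 \<le> s" "s \<le> t" "t \<le> real N" "t - s \<le> 1 / 2^n"
  shows "\<bar>W t \<omega> - W s \<omega>\<bar> \<le> 19 * K * (9/10)^n"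
proof -
  have "continuous_on {0..real N} (\<lambda>t. W t \<omega>)"
    using BM assms(1) unfolding brownian_motion_def by (auto intro: continuous_on_subset)
  moreover have "\<bar>W (real (Suc k) / 2^j) \<omega> - W (real k / 2^j) \<omega>\<bar> \<le> K * (9/10)^j"
    if "k < N * 2^j" for j k
    using assms(1,2) that
    unfolding large_dyadic_increments_def large_increments_at_level_def by (auto simp: not_less)
  ultimately show ?thesis
    using dyadic_modulus[of N "\<lambda>t. W t \<omega>" K "9/10"] assms(3-) by simp
qed

lemma large_increments_at_level_measure:
  assumes "0 < K"
  shows "measure M (large_increments_at_level K N j) \<le> 3 * real N / K^4 * (5000/6561)^j"
proof -
  interpret prob_space M by (rule brownian_motion_prob_space)
  define A where "A k = {\<omega>\<in>space M. K * (9/10)^j < \<bar>W (real (Suc k) / 2^j) \<omega> - W (real k / 2^j) \<omega>\<bar>}"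
    for k
  have A_measure: "measure M (A k) \<le> 3 * (1/2^j)^2 / (K * (9/10)^j)^4" for k
  proof -
    have lt: "real k / 2^j < real (Suc k) / 2^j"
      by (simp add: divide_strict_right_mono)
    have diff: "real (Suc k) / 2^j - real k / 2^j = 1/2^j"
      by (simp add: field_simps)
    have "measure M (A k) \<le> 3 * (sqrt (1/2^j))^4 / (K * (9/10)^j)^4"
      unfolding A_def using assms
      by (intro normal_tail_fourth_moment[OF brownian_motion_prob_space
            brownian_motion_increment_distributed[OF _ lt, unfolded diff]]) auto
    also have "(sqrt (1/2^j :: real))^4 = (1/2^j)^2"
      by (simp add: power4_eq_xxxx power2_eq_square)
    finally show ?thesis .
  qed
  have scale: "2^j * ((1/2^j)^2 / (K * (9/10)^j)^4) = (5000/6561::real)^j / K^4"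
  proof -
    have "(5000/6561::real)^j = (2 * (1/2)^2 / (9/10)^4)^j"
      by (simp add: eval_nat_numeral)
    also have "\<dots> = 2^j * ((1/2)^j)^2 / ((9/10)^j)^4"
      by (simp only: power_mult_distrib power_divide flip: power_mult) (simp only: mult.commute)
    finally show ?thesis
      by (simp add: power_mult_distrib power_one_over)
  qed
  have "measure M (large_increments_at_level K N j) \<le> (\<Sum>k<N * 2^j. measure M (A k))"
    unfolding large_increments_at_level_def A_def[symmetric]
    by (rule finite_measure_subadditive_finite) (auto simp: A_def)
  also have "\<dots> \<le> (\<Sum>k<N * 2^j. 3 * (1/2^j)^2 / (K * (9/10)^j)^4)"
    by (intro sum_mono A_measure)
  also have "\<dots> = 3 * real N * (2^j * ((1/2^j)^2 / (K * (9/10)^j)^4))"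
    by simp
  also have "\<dots> = 3 * real N / K^4 * (5000/6561)^j"
    unfolding scale by simp
  finally show ?thesis .
qed

lemma large_dyadic_increments_measure:
  assumes "0 < K"
  shows "measure M (large_dyadic_increments K N) \<le> 13 * real N / K^4"
proof -
  interpret prob_space M by (rule brownian_motion_prob_space)
  define b where "b j = 3 * real N / K^4 * (5000/6561)^j" for j :: nat
  have "summable b"
    unfolding b_def by (intro summable_mult summable_geometric) simp
  then have summable: "summable (\<lambda>j. measure M (large_increments_at_level K N j))"
    by (rule summable_comparison_test')
      (use large_increments_at_level_measure[OF assms] in \<open>auto simp: b_def\<close>)
  have "measure M (large_dyadic_increments K N) \<le> (\<Sum>j. measure M (large_increments_at_level K N j))"
    unfolding large_dyadic_increments_def
    by (rule finite_measure_subadditive_countably) (auto simp: summable)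
  also have "\<dots> \<le> (\<Sum>j. b j)"
    using large_increments_at_level_measure[OF assms]
    by (intro suminf_le summable \<open>summable b\<close>) (simp add: b_def)
  also have "\<dots> = 3 * real N / K^4 * (6561/1561)"
    unfolding b_def by (subst suminf_mult) (auto simp: suminf_geometric)
  also have "\<dots> \<le> 13 * real N / K^4"
    using assms by (simp add: divide_simps)
  finally show ?thesis .
qed

lemma unit_increment_distributed:
  "distributed M lborel (\<lambda>\<omega>. W (real (Suc k)) \<omega> - W (real k) \<omega>) (\<lambda>x. ennreal (normal_density 0 1 x))"
  using brownian_motion_increment_distributed[of "real k" "real (Suc k)"] by simp

lemma unit_increments_above_measure:
  "measure M (unit_increments_above c N) = measure M {\<omega>\<in>space M. c < W 1 \<omega> - W 0 \<omega>} ^ N"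
proof -
  interpret prob_space M by (rule brownian_motion_prob_space)
  define A where "A k = {\<omega>\<in>space M. c < W (real (Suc k)) \<omega> - W (real k) \<omega>}" for k
  have A_measure: "prob (A k) = prob (A 0)" for k
  proof -
    have "emeasure M (A k) = (\<integral>\<^sup>+y. ennreal (normal_density 0 1 y) * indicator {c<..} y \<partial>lborel)" for k
    proof -
      have "A k = (\<lambda>\<omega>. W (real (Suc k)) \<omega> - W (real k) \<omega>) -` {c<..} \<inter> space M"
        unfolding A_def by auto
      then show ?thesis
        using distributed_emeasure[OF unit_increment_distributed] by simp
    qed
    then show ?thesis
      by (simp add: measure_def)
  qed
  have "indep_events A {..<N}"
    unfolding A_def
    by (rule indep_eventsI_indep_vars[OF brownian_motion_unit_increments_indep, where P="\<lambda>_ y. c < y"]) simp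
  then have "N > 0 \<Longrightarrow> prob (\<Inter>k<N. A k) = (\<Prod>k<N. prob (A k))"
    unfolding indep_events_def by auto
  moreover have "N > 0 \<Longrightarrow> unit_increments_above c N = (\<Inter>k<N. A k)"
    unfolding unit_increments_above_def A_def by auto
  ultimately show ?thesis
    using A_measure by (cases "N = 0") (auto simp: unit_increments_above_def A_def prob_space)
qed

lemma unit_increments_above_tendsto: "(\<lambda>N. measure M (unit_increments_above c N)) \<longlonglongrightarrow> 0"
proof -
  interpret prob_space M by (rule brownian_motion_prob_space)
  have "{\<omega>\<in>space M. c < W 1 \<omega> - W 0 \<omega>} = space M - {\<omega>\<in>space M. W 1 \<omega> - W 0 \<omega> \<le> c}"
    by auto
  then have "prob {\<omega>\<in>space M. c < W 1 \<omega> - W 0 \<omega>} = 1 - prob {\<omega>\<in>space M. W 1 \<omega> - W 0 \<omega> \<le> c}"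
    by (simp add: prob_compl)
  moreover have "0 < prob {\<omega>\<in>space M. W 1 \<omega> - W 0 \<omega> \<le> c}"
    using std_normal_le_pos[OF brownian_motion_prob_space unit_increment_distributed[of 0]] by simp
  ultimately show ?thesis
    unfolding unit_increments_above_measure by (intro LIMSEQ_power_zero) auto
qed

lemma exceptional_set_small:
  assumes "0 < \<epsilon>"
  shows "\<exists>N K. 0 < K \<and> measure M (large_dyadic_increments K N \<union> unit_increments_above c N) < \<epsilon>"
proof -
  have "\<forall>\<^sub>F N in sequentially. measure M (unit_increments_above c N) < \<epsilon> / 2"
    using assms by (intro order_tendstoD(2)[OF unit_increments_above_tendsto]) simp
  then obtain N where N: "measure M (unit_increments_above c N) < \<epsilon> / 2"
    by (auto simp: eventually_sequentially)
  have "((\<lambda>K::real. 13 * real N / K^4) \<longlongrightarrow> 0) at_top"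
    by real_asymp
  then have "\<forall>\<^sub>F K in at_top. 0 < K \<and> 13 * real N / K^4 < \<epsilon> / 2"
    using assms by (intro eventually_conj eventually_gt_at_top order_tendstoD(2)) auto
  then obtain K :: real where K: "0 < K" "13 * real N / K^4 < \<epsilon> / 2"
    by (auto simp: eventually_at_top_linorder)
  have "measure M (large_dyadic_increments K N \<union> unit_increments_above c N)
          \<le> measure M (large_dyadic_increments K N) + measure M (unit_increments_above c N)"
    by (intro measure_Un_le) measurable
  also have "\<dots> < \<epsilon>"
    using large_dyadic_increments_measure[OF K(1), of N] K(2) N by linarith
  finally show ?thesis
    using K(1) by blast
qed

lemma early_hit_subset:
  fixes q :: "real \<Rightarrow> 'a \<Rightarrow> real" and a \<beta> \<gamma> l K :: real and N :: nat
  assumes "0 < \<beta>" "\<gamma> < 0" "0 < l" "l \<le> 1" "0 \<le> K"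
    and cont: "\<And>\<omega>. \<omega> \<in> space M \<Longrightarrow> continuous_on {0..} (\<lambda>t. q t \<omega>)"
    and sde: "\<And>\<omega> t. \<omega> \<in> space M \<Longrightarrow> 0 \<le> t \<Longrightarrow>
                q t \<omega> = W t \<omega> + integral {0..t} (\<lambda>s. (a - exp (q s \<omega> / \<beta>)) / 4)"
    and strong_drift: "19 * K < (exp (l / (2 * \<beta>)) - a) / 4"
                      "2 * (19 * K)^8 < (exp (l / (2 * \<beta>)) - a) / 4 * (l / 2)^7"
  shows "{\<omega>\<in>space M. hit_time (\<lambda>t. q t \<omega>) l < hit_time (\<lambda>t. q t \<omega>) \<gamma>}
           \<subseteq> large_dyadic_increments K N \<union> unit_increments_above (\<gamma> - 1 - a/4) N"
proof
  fix \<omega> assume \<omega>: "\<omega> \<in> {\<omega>\<in>space M. hit_time (\<lambda>t. q t \<omega>) l < hit_time (\<lambda>t. q t \<omega>) \<gamma>}"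
  show "\<omega> \<in> large_dyadic_increments K N \<union> unit_increments_above (\<gamma> - 1 - a/4) N"
  proof (cases "\<omega> \<in> large_dyadic_increments K N")
    case False
    have \<omega>': "\<omega> \<in> space M" "hit_time (\<lambda>t. q t \<omega>) l < hit_time (\<lambda>t. q t \<omega>) \<gamma>"
      using \<omega> by auto
    have "W 0 \<omega> = 0"
      using BM \<omega>' unfolding brownian_motion_def by auto
    moreover have "\<And>t. 0 \<le> t \<Longrightarrow> q t \<omega> = W t \<omega> + integral {0..t} (\<lambda>s. (a - exp (q s \<omega> / \<beta>)) / 4)"
      using sde[OF \<omega>'(1)] .
    moreover have "\<bar>W t \<omega> - W s \<omega>\<bar> \<le> (19 * K) * (9/10)^n"
      if "0 \<le> s" "s \<le> t" "t \<le> real N" "t - s \<le> 1 / 2^n" for n s t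
      using modulus_outside_large_dyadic_increments[OF \<omega>'(1) False \<open>0 \<le> K\<close> that] by simp
    ultimately have "\<forall>k<N. \<gamma> - 1 - a/4 < W (real (Suc k)) \<omega> - W (real k) \<omega>"
      by (rule sde_unit_increments_lower_bound[OF assms(1-4) _ cont[OF \<omega>'(1)] _ _ strong_drift \<omega>'(2)])
    then show ?thesis
      using \<omega> unfolding unit_increments_above_def by auto
  qed simp
qed

end

lemma eventually_strong_drift:
  fixes a C :: real
  shows "\<forall>\<^sub>F \<beta> in at_right 0. 0 < \<beta> \<and> \<beta> powr (1/6) \<le> 1 \<and>
      C < (exp (\<beta> powr (1/6) / (2 * \<beta>)) - a) / 4 \<and>
      2 * C^8 < (exp (\<beta> powr (1/6) / (2 * \<beta>)) - a) / 4 * (\<beta> powr (1/6) / 2)^7"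
  by (intro eventually_conj; real_asymp)

theorem lemma4p2:
  fixes a \<gamma> :: real and M :: "'a measure" and W :: "real \<Rightarrow> 'a \<Rightarrow> real"
    and q :: "real \<Rightarrow> real \<Rightarrow> 'a \<Rightarrow> real"
  assumes "a > 0" and "\<gamma> < 0"
    and BM: "brownian_motion M W"
    and q_meas: "\<And>\<beta> t. \<beta> > 0 \<Longrightarrow> t \<ge> 0 \<Longrightarrow> q \<beta> t \<in> borel_measurable M"
    and q_cont: "\<And>\<beta> \<omega>. \<beta> > 0 \<Longrightarrow> \<omega> \<in> space M \<Longrightarrow> continuous_on {0..} (\<lambda>t. q \<beta> t \<omega>)"
    and q_sde: "\<And>\<beta> \<omega> t. \<beta> > 0 \<Longrightarrow> \<omega> \<in> space M \<Longrightarrow> t \<ge> 0 \<Longrightarrow>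
       q \<beta> t \<omega> = W t \<omega> + integral {0..t} (\<lambda>s. (a - exp (q \<beta> s \<omega> / \<beta>)) / 4)"
  shows "((\<lambda>\<beta>. measure M {\<omega> \<in> space M.
             hit_time (\<lambda>t. q \<beta> t \<omega>) (\<beta> powr (1/6)) < hit_time (\<lambda>t. q \<beta> t \<omega>) \<gamma>})
          \<longlongrightarrow> 0) (at_right 0)"
proof (rule tendstoI)
  interpret prob_space M
    using BM by (rule brownian_motion_prob_space)
  fix \<epsilon> :: real assume "0 < \<epsilon>"
  then obtain N K where "0 < K" and small:
    "measure M (large_dyadic_increments M W K N \<union> unit_increments_above M W (\<gamma> - 1 - a/4) N) < \<epsilon>"
    using exceptional_set_small[OF BM] by blast
  show "\<forall>\<^sub>F \<beta> in at_right 0. dist (measure M {\<omega> \<in> space M.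
          hit_time (\<lambda>t. q \<beta> t \<omega>) (\<beta> powr (1/6)) < hit_time (\<lambda>t. q \<beta> t \<omega>) \<gamma>}) 0 < \<epsilon>"
    using eventually_strong_drift[of "19 * K" a]
  proof (rule eventually_mono)
    fix \<beta> :: real assume \<beta>: "0 < \<beta> \<and> \<beta> powr (1/6) \<le> 1 \<and>
      19 * K < (exp (\<beta> powr (1/6) / (2 * \<beta>)) - a) / 4 \<and>
      2 * (19 * K)^8 < (exp (\<beta> powr (1/6) / (2 * \<beta>)) - a) / 4 * (\<beta> powr (1/6) / 2)^7"
    \<comment> \<open>The event need not be measurable: it is bounded by a measurable superset.\<close>
    have "measure M {\<omega> \<in> space M. hit_time (\<lambda>t. q \<beta> t \<omega>) (\<beta> powr (1/6)) < hit_time (\<lambda>t. q \<beta> t \<omega>) \<gamma>}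
            \<le> measure M (large_dyadic_increments M W K N \<union> unit_increments_above M W (\<gamma> - 1 - a/4) N)"
      using \<beta> \<open>0 < K\<close> \<open>\<gamma> < 0\<close> q_cont q_sde
      by (intro finite_measure_mono early_hit_subset[OF BM]
          sets.Un[OF large_dyadic_increments_sets[OF BM] unit_increments_above_sets[OF BM]]) auto
    then show "dist (measure M {\<omega> \<in> space M.
          hit_time (\<lambda>t. q \<beta> t \<omega>) (\<beta> powr (1/6)) < hit_time (\<lambda>t. q \<beta> t \<omega>) \<gamma>}) 0 < \<epsilon>"
      using small by simp
  qed
qed

end
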